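(* Let $Z$ be a metric space and let $X, Y \subseteq Z$ be compact subsets. Regard $\mathcal{H}(X)$ and $\mathcal{H}(Y)$ as subsets of the metric space $\mathcal{H}(Z)$ (with the Hausdorff distance). Then $$\bigl|\mathcal{H}(X)\,\mathcal{H}(Y)\bigr|_{\mathcal{H}(Z)} = |XY|_Z,$$ i.e. the Hausdorff distance in $\mathcal{H}(Z)$ between $\mathcal{H}(X)$ and $\mathcal{H}(Y)$ equals the Hausdorff distance in $Z$ between $X$ and $Y$.
   Context: For a metric space $Z$, $|xy|$ denotes the distance between points; for nonempty $B \subseteq Z$ and $x \in Z$, $|xB| = \inf\{|xb| : b \in B\}$. For nonempty subsets $P,Q$ of a metric space $W$, the Hausdorff distance is $|PQ|_W = \max\{\sup_{p\in P}|pQ|, \sup_{q\in Q}|qP|\}$. For a metric space $W$, $\mathcal{H}(W)$ (the Hausdorff hyperspace) is the family of all nonempty bounded closed subsets of $W$ endowed with the Hausdorff distance; for compact $X\subseteq Z$, $\mathcal{H}(X)\subseteq\mathcal{H}(Z)$. *)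

theory Defs
  imports "HOL-Analysis.Analysis"
begin

text \<open>Hausdorff distance between nonempty subsets P, Q of a space with distance function d:
  max of sup over p in P of inf over q in Q of d p q, and symmetrically.
  (Meaningful for nonempty sets with bounded values, as in the paper.)\<close>
definition gen_hausdist :: "('b \<Rightarrow> 'b \<Rightarrow> real) \<Rightarrow> 'b set \<Rightarrow> 'b set \<Rightarrow> real" where
  "gen_hausdist d P Q =
     max (SUP p\<in>P. INF q\<in>Q. d p q) (SUP q\<in>Q. INF p\<in>P. d q p)"

definition hausdist_Z :: "'a::metric_space set \<Rightarrow> 'a set \<Rightarrow> real" where
  "hausdist_Z = gen_hausdist dist"

definition hyperspace :: "'a::metric_space set \<Rightarrow> 'a set set" where
  "hyperspace W = {A. A \<noteq> {} \<and> A \<subseteq> W \<and> bounded A \<and> closedin (top_of_set W) A}"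

end

theory Submission
  imports Defs
begin

text \<open>Both one-sided parts of the Hausdorff distance are preserved separately:
  the supremum over compact \<open>A \<subseteq> X\<close> of the distance from \<open>A\<close> to the hyperspace of \<open>Y\<close>
  equals \<open>sup\<^sub>x\<^sub>\<in>\<^sub>X |xY|\<close>. Taking \<open>A = X\<close> and noting \<open>|xY| \<le> |xB|\<close> for \<open>B \<subseteq> Y\<close> gives
  one inequality. For the other, given \<open>A\<close> let \<open>e = sup\<^sub>x\<^sub>\<in>\<^sub>X |xY|\<close> and
  \<open>B = {y \<in> Y. |yA| \<le> e}\<close>: it is closed, and by compactness of \<open>Y\<close> it contains a nearest
  point of every \<open>a \<in> A\<close>, so \<open>|AB| \<le> e\<close>.\<close>

lemma infdist_attained_compact:
  fixes A :: "'a::metric_space set"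
  assumes "compact A" "A \<noteq> {}"
  obtains a where "a \<in> A" "infdist x A = dist x a"
proof -
  have "continuous_on A (dist x)" by (intro continuous_intros)
  from continuous_attains_inf[OF assms this] obtain a
    where a: "a \<in> A" "\<And>y. y \<in> A \<Longrightarrow> dist x a \<le> dist x y"
    by blast
  have "dist x a \<le> infdist x A"
    unfolding infdist_notempty[OF assms(2)] using assms(2) a(2) by (rule cINF_greatest)
  with infdist_le[OF a(1), of x] a(1) that show ?thesis by simp
qed

lemma bdd_above_infdist_compact:
  fixes P Q :: "'a::metric_space set"
  assumes "compact P"
  shows "bdd_above ((\<lambda>p. infdist p Q) ` P)"
proof -
  have "continuous_on P (\<lambda>p. infdist p Q)" by (intro continuous_intros)
  with assms have "compact ((\<lambda>p. infdist p Q) ` P)" by (rule compact_continuous_image[rotated])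
  then show ?thesis by (intro bounded_imp_bdd_above compact_imp_bounded)
qed

lemma hausdist_Z_eq_max_SUP_infdist:
  fixes P Q :: "'a::metric_space set"
  assumes "P \<noteq> {}" "Q \<noteq> {}"
  shows "hausdist_Z P Q = max (SUP p\<in>P. infdist p Q) (SUP q\<in>Q. infdist q P)"
  unfolding hausdist_Z_def gen_hausdist_def infdist_def using assms by simp

lemma hausdist_Z_le:
  fixes P Q :: "'a::metric_space set"
  assumes "P \<noteq> {}" "Q \<noteq> {}"
    and "\<And>p. p \<in> P \<Longrightarrow> infdist p Q \<le> e" "\<And>q. q \<in> Q \<Longrightarrow> infdist q P \<le> e"
  shows "hausdist_Z P Q \<le> e"
  unfolding hausdist_Z_eq_max_SUP_infdist[OF assms(1,2)]
  by (intro max.boundedI cSUP_least) (use assms in auto)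

lemma infdist_le_hausdist_Z:
  fixes P Q :: "'a::metric_space set"
  assumes "compact P" "p \<in> P" "Q \<noteq> {}"
  shows "infdist p Q \<le> hausdist_Z P Q"
proof -
  have "infdist p Q \<le> (SUP p\<in>P. infdist p Q)"
    using assms(2) bdd_above_infdist_compact[OF assms(1)] by (rule cSUP_upper)
  then show ?thesis
    using hausdist_Z_eq_max_SUP_infdist[OF _ assms(3), of P] assms(2) by fastforce
qed

lemma hausdist_Z_nonneg:
  fixes P Q :: "'a::metric_space set"
  assumes "compact P" "P \<noteq> {}" "Q \<noteq> {}"
  shows "0 \<le> hausdist_Z P Q"
proof -
  obtain p where "p \<in> P" using assms(2) by blast
  with assms show ?thesis by (meson infdist_le_hausdist_Z infdist_nonneg order_trans)
qed

lemma mem_hyperspace_compact: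
  assumes "compact X" "A \<in> hyperspace X"
  shows "compact A" "A \<noteq> {}" "A \<subseteq> X"
proof -
  from assms(2) have "closedin (top_of_set X) A" "A \<noteq> {}" "A \<subseteq> X"
    unfolding hyperspace_def by auto
  then obtain T where "closed T" "A = X \<inter> T" by (auto simp: closedin_closed)
  with assms(1) show "compact A" by (simp add: compact_Int_closed)
  show "A \<noteq> {}" "A \<subseteq> X" by fact+
qed

lemma self_mem_hyperspace:
  assumes "compact X" "X \<noteq> {}"
  shows "X \<in> hyperspace X"
  using assms unfolding hyperspace_def by (auto simp: compact_imp_bounded)

lemma exists_hyperspace_hausdist_Z_le:
  fixes A Y :: "'a::metric_space set"
  assumes "compact A" "A \<noteq> {}" "compact Y" "Y \<noteq> {}"
    and near: "\<And>a. a \<in> A \<Longrightarrow> infdist a Y \<le> e"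
  obtains B where "B \<in> hyperspace Y" "hausdist_Z A B \<le> e"
proof -
  define B where "B = {y\<in>Y. infdist y A \<le> e}"
  have nearest: "\<exists>y\<in>B. dist a y \<le> e" if "a \<in> A" for a
  proof -
    obtain y where y: "y \<in> Y" "infdist a Y = dist a y"
      using infdist_attained_compact[OF assms(3,4)] by blast
    with near[OF that] have "dist a y \<le> e" by simp
    moreover then have "infdist y A \<le> e"
      using infdist_le2[OF that, of y] by (simp add: dist_commute)
    ultimately show ?thesis using y(1) unfolding B_def by blast
  qed
  have "closed {y. infdist y A \<le> e}"
    by (intro closed_Collect_le continuous_intros)
  then have "closedin (top_of_set Y) B"
    unfolding B_def closedin_closed by (intro exI[of _ "{y. infdist y A \<le> e}"]) auto
  moreover have "B \<noteq> {}" using nearest assms(2) by blast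
  moreover have "bounded B"
    using compact_imp_bounded[OF assms(3)] by (rule bounded_subset) (auto simp: B_def)
  ultimately have "B \<in> hyperspace Y" unfolding hyperspace_def B_def by auto
  moreover have "hausdist_Z A B \<le> e"
  proof (rule hausdist_Z_le)
    show "infdist a B \<le> e" if "a \<in> A" for a using nearest[OF that] infdist_le2 by blast
    show "infdist b A \<le> e" if "b \<in> B" for b using that unfolding B_def by auto
  qed fact+
  ultimately show ?thesis by (rule that)
qed

lemma SUP_infdist_le_hausdist_Z_subset:
  fixes P B Y :: "'a::metric_space set"
  assumes "compact P" "P \<noteq> {}" "B \<subseteq> Y" "B \<noteq> {}"
  shows "(SUP p\<in>P. infdist p Y) \<le> hausdist_Z P B"
proof (rule cSUP_least)
  fix p assume "p \<in> P"
  have "infdist p Y \<le> infdist p B" using assms(3,4) by (rule infdist_mono)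
  also have "\<dots> \<le> hausdist_Z P B" using assms(1) \<open>p \<in> P\<close> assms(4) by (rule infdist_le_hausdist_Z)
  finally show "infdist p Y \<le> hausdist_Z P B" .
qed fact

lemma SUP_INF_hausdist_Z_hyperspace:
  fixes X Y :: "'a::metric_space set"
  assumes "compact X" "compact Y" "X \<noteq> {}" "Y \<noteq> {}"
  shows "(SUP A\<in>hyperspace X. INF B\<in>hyperspace Y. hausdist_Z A B) = (SUP x\<in>X. infdist x Y)"
    (is "(SUP A\<in>hyperspace X. ?dist_to_Y A) = ?e")
proof (rule antisym)
  have X: "X \<in> hyperspace X" and Y: "Y \<in> hyperspace Y"
    using assms by (simp_all add: self_mem_hyperspace)
  have dist_to_Y_le: "?dist_to_Y A \<le> ?e" if "A \<in> hyperspace X" for A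
  proof -
    note A = mem_hyperspace_compact[OF assms(1) that]
    have "infdist a Y \<le> ?e" if "a \<in> A" for a
      using A(3) that bdd_above_infdist_compact[OF assms(1)] by (auto intro: cSUP_upper)
    then obtain B where B: "B \<in> hyperspace Y" "hausdist_Z A B \<le> ?e"
      using exists_hyperspace_hausdist_Z_le[OF A(1,2) assms(2,4)] by blast
    have "bdd_below (hausdist_Z A ` hyperspace Y)"
      using hausdist_Z_nonneg[OF A(1,2)] mem_hyperspace_compact(2)[OF assms(2)]
      by (intro bdd_belowI2[where m=0]) auto
    with B show ?thesis by (meson cINF_lower order_trans)
  qed
  then show "(SUP A\<in>hyperspace X. ?dist_to_Y A) \<le> ?e"
    using X by (intro cSUP_least) auto
  have "?e \<le> ?dist_to_Y X"
    using Y by (intro cINF_greatest SUP_infdist_le_hausdist_Z_subset)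
      (auto dest: mem_hyperspace_compact[OF assms(2)] simp: assms)
  also have "\<dots> \<le> (SUP A\<in>hyperspace X. ?dist_to_Y A)"
    using X dist_to_Y_le by (intro cSUP_upper bdd_aboveI2[where M="?e"])
  finally show "?e \<le> (SUP A\<in>hyperspace X. ?dist_to_Y A)" .
qed

theorem mainTheorem6:
  fixes X Y :: "'a::metric_space set"
  assumes "compact X" "compact Y" "X \<noteq> {}" "Y \<noteq> {}"
  shows "gen_hausdist hausdist_Z (hyperspace X) (hyperspace Y) = hausdist_Z X Y"
  unfolding gen_hausdist_def hausdist_Z_eq_max_SUP_infdist[OF assms(3,4)]
  using SUP_INF_hausdist_Z_hyperspace[OF assms] SUP_INF_hausdist_Z_hyperspace[OF assms(2,1,4,3)]
  by simp

end
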